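(* Let $K$ be a clique simplicial complex, $X\cup Y=K_0$ a cover of its vertex set, $A:=X\cap Y$, and $P:=\{\sigma\in K\mid\sigma\subset X\text{ or }\sigma\subset Y\text{ or }\sigma\cap A\neq\emptyset\}$. Assume one of the following: (1) $A$ is nonempty and, for every edge $\tau\in K_1\setminus P$ and every subset $\mu\subset A$ with $|\mu|\le2$, the union $\tau\cup\mu$ is a simplex of $K$; (2) $A=\{v\}$ and, for every edge $\tau\in K_1\setminus P$, the set $\tau\cup\{v\}$ is a simplex of $K$. Then the inclusion $K_X\cup K_Y\hookrightarrow K$ is a weak equivalence.
   Context: A simplicial complex is a collection of finite nonempty subsets of a fixed set closed under taking nonempty subsets; $K_0$ is its vertex set, $K_1$ its set of edges, $K_B$ the subcomplex of simplices contained in $B$. $K$ is clique if a set with at least two elements is a simplex iff all its two-element subsets are simplices. Homotopical notions refer to geometric realizations. *)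

theory Defs
  imports "HOL-Analysis.Analysis"
begin

definition simplicial_complex :: "'a set set \<Rightarrow> bool" where
  "simplicial_complex K \<longleftrightarrow>
     (\<forall>\<sigma>\<in>K. finite \<sigma> \<and> \<sigma> \<noteq> {} \<and> (\<forall>\<tau>. \<tau> \<subseteq> \<sigma> \<and> \<tau> \<noteq> {} \<longrightarrow> \<tau> \<in> K))"

definition vertices :: "'a set set \<Rightarrow> 'a set" where
  "vertices K = {v. {v} \<in> K}"

definition edges :: "'a set set \<Rightarrow> 'a set set" where
  "edges K = {\<sigma>\<in>K. card \<sigma> = 2}"

definition full_subcomplex :: "'a set set \<Rightarrow> 'a set \<Rightarrow> 'a set set" where
  "full_subcomplex K B = {\<sigma>\<in>K. \<sigma> \<subseteq> B}"

definition clique_complex :: "'a set set \<Rightarrow> bool" where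
  "clique_complex K \<longleftrightarrow>
     (\<forall>\<sigma>. finite \<sigma> \<and> card \<sigma> \<ge> 2 \<longrightarrow>
        (\<sigma> \<in> K \<longleftrightarrow> (\<forall>u\<in>\<sigma>. \<forall>v\<in>\<sigma>. u \<noteq> v \<longrightarrow> {u, v} \<in> K)))"

text \<open>Geometric realization: points are barycentric coordinate functions whose
  support is a simplex; the topology is the coherent (weak) topology with respect to
  the closed simplices, each carrying its Euclidean (= product) topology.\<close>
definition closed_simplex :: "'a set \<Rightarrow> ('a \<Rightarrow> real) set" where
  "closed_simplex \<sigma> = {\<alpha>. (\<forall>v. 0 \<le> \<alpha> v) \<and> (\<forall>v. v \<notin> \<sigma> \<longrightarrow> \<alpha> v = 0) \<and> sum \<alpha> \<sigma> = 1}"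

definition realization_set :: "'a set set \<Rightarrow> ('a \<Rightarrow> real) set" where
  "realization_set K = (\<Union>\<sigma>\<in>K. closed_simplex \<sigma>)"

definition realization :: "'a set set \<Rightarrow> ('a \<Rightarrow> real) topology" where
  "realization K = topology (\<lambda>U. U \<subseteq> realization_set K \<and>
      (\<forall>\<sigma>\<in>K. openin (subtopology (powertop_real UNIV) (closed_simplex \<sigma>)) (U \<inter> closed_simplex \<sigma>)))"

text \<open>Weak homotopy equivalence: bijection on all homotopy sets
  \<open>[(S^n, b), (X, x)]\<close> (n \<ge> 0, every basepoint x), plus the empty-space case of \<open>\<pi>_0\<close>.\<close>
definition sphere_base :: "nat \<Rightarrow> real" where
  "sphere_base = (\<lambda>i. if i = 0 then 1 else 0)"

definition weak_equivalence :: "'a topology \<Rightarrow> 'b topology \<Rightarrow> ('a \<Rightarrow> 'b) \<Rightarrow> bool" where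
  "weak_equivalence X Y f \<longleftrightarrow>
     continuous_map X Y f \<and>
     (topspace X = {} \<longrightarrow> topspace Y = {}) \<and>
     (\<forall>n. \<forall>x\<in>topspace X.
        (\<forall>g h. continuous_map (nsphere n) X g \<and> g sphere_base = x \<and>
               continuous_map (nsphere n) X h \<and> h sphere_base = x \<and>
               homotopic_with (\<lambda>k. k sphere_base = f x) (nsphere n) Y (f \<circ> g) (f \<circ> h)
           \<longrightarrow> homotopic_with (\<lambda>k. k sphere_base = x) (nsphere n) X g h) \<and>
        (\<forall>k. continuous_map (nsphere n) Y k \<and> k sphere_base = f x \<longrightarrow>
           (\<exists>g. continuous_map (nsphere n) X g \<and> g sphere_base = x \<and>
                homotopic_with (\<lambda>k. k sphere_base = f x) (nsphere n) Y k (f \<circ> g))))"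

end

theory Submission
  imports Defs
begin

text \<open>Pick \<open>a \<in> X \<inter> Y\<close>. Using the clique property, the hypothesis gives that every simplex
  \<open>\<sigma>\<close> of \<open>K\<close> contained in neither \<open>X\<close> nor \<open>Y\<close> can be coned off: \<open>\<sigma> \<union> {a} \<in> K\<close>.
  On barycentric coordinates, shave each vertex of \<open>X - Y\<close> by at most the total mass on
  \<open>Y - X\<close> and vice versa, and put the removed mass on \<open>a\<close>. The lighter side is emptied,
  so the result lies in a simplex of \<open>K\<^sub>X\<close> or \<open>K\<^sub>Y\<close>, and points of \<open>|K\<^sub>X \<union> K\<^sub>Y|\<close> are
  not moved. This retraction keeps each point in the closed simplex of \<open>\<sigma> \<union> {a}\<close>, so the
  straight-line homotopy to the identity makes \<open>|K\<^sub>X \<union> K\<^sub>Y|\<close> a strong deformation retract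
  of \<open>|K|\<close>.\<close>

section \<open>Realizations\<close>

abbreviation simplex_topology :: "'a set \<Rightarrow> ('a \<Rightarrow> real) topology" where
  "simplex_topology \<sigma> \<equiv> subtopology (powertop_real UNIV) (closed_simplex \<sigma>)"

lemma istopology_realization:
  "istopology (\<lambda>U. U \<subseteq> realization_set K \<and>
     (\<forall>\<sigma>\<in>K. openin (simplex_topology \<sigma>) (U \<inter> closed_simplex \<sigma>)))"
  unfolding istopology_def
proof (rule conjI; intro allI impI)
  fix S T :: "('a \<Rightarrow> real) set"
  assume S: "S \<subseteq> realization_set K \<and> (\<forall>\<sigma>\<in>K. openin (simplex_topology \<sigma>) (S \<inter> closed_simplex \<sigma>))"
    and T: "T \<subseteq> realization_set K \<and> (\<forall>\<sigma>\<in>K. openin (simplex_topology \<sigma>) (T \<inter> closed_simplex \<sigma>))"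
  show "S \<inter> T \<subseteq> realization_set K \<and>
      (\<forall>\<sigma>\<in>K. openin (simplex_topology \<sigma>) (S \<inter> T \<inter> closed_simplex \<sigma>))"
  proof (intro conjI ballI)
    show "S \<inter> T \<subseteq> realization_set K"
      using S by blast
    fix \<sigma> assume "\<sigma> \<in> K"
    then have "openin (simplex_topology \<sigma>) (S \<inter> closed_simplex \<sigma>)"
      "openin (simplex_topology \<sigma>) (T \<inter> closed_simplex \<sigma>)"
      using S T by blast+
    then have "openin (simplex_topology \<sigma>) ((S \<inter> closed_simplex \<sigma>) \<inter> (T \<inter> closed_simplex \<sigma>))"
      by (rule openin_Int)
    moreover have "S \<inter> T \<inter> closed_simplex \<sigma> = (S \<inter> closed_simplex \<sigma>) \<inter> (T \<inter> closed_simplex \<sigma>)"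
      by blast
    ultimately show "openin (simplex_topology \<sigma>) (S \<inter> T \<inter> closed_simplex \<sigma>)"
      by simp
  qed
next
  fix F :: "('a \<Rightarrow> real) set set"
  assume F: "\<forall>S\<in>F. S \<subseteq> realization_set K \<and>
    (\<forall>\<sigma>\<in>K. openin (simplex_topology \<sigma>) (S \<inter> closed_simplex \<sigma>))"
  show "\<Union>F \<subseteq> realization_set K \<and>
      (\<forall>\<sigma>\<in>K. openin (simplex_topology \<sigma>) (\<Union>F \<inter> closed_simplex \<sigma>))"
  proof (intro conjI ballI)
    show "\<Union>F \<subseteq> realization_set K"
      using F by blast
    fix \<sigma> assume "\<sigma> \<in> K"
    then have "openin (simplex_topology \<sigma>) (\<Union>S\<in>F. S \<inter> closed_simplex \<sigma>)"
      using F by (intro openin_Union) auto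
    then show "openin (simplex_topology \<sigma>) (\<Union>F \<inter> closed_simplex \<sigma>)"
      by (simp only: Int_Union2)
  qed
qed

lemma openin_realization:
  "openin (realization K) U \<longleftrightarrow> U \<subseteq> realization_set K \<and>
     (\<forall>\<sigma>\<in>K. openin (simplex_topology \<sigma>) (U \<inter> closed_simplex \<sigma>))"
  unfolding realization_def using istopology_realization[of K] by simp

lemma topspace_realization [simp]: "topspace (realization K) = realization_set K"
proof (rule subset_antisym)
  show "topspace (realization K) \<subseteq> realization_set K"
    using openin_realization openin_topspace by blast
  have "realization_set K \<inter> closed_simplex \<sigma> = topspace (simplex_topology \<sigma>)" if "\<sigma> \<in> K" for \<sigma>
    using that by (auto simp: realization_set_def)
  then have "openin (realization K) (realization_set K)"
    by (simp add: openin_realization del: topspace_subtopology)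
  then show "realization_set K \<subseteq> topspace (realization K)"
    by (rule openin_subset)
qed

lemma continuous_map_closed_simplex_realization:
  assumes "\<sigma> \<in> K"
  shows "continuous_map (simplex_topology \<sigma>) (realization K) id"
  unfolding continuous_map_def
proof (intro conjI allI impI)
  show "id \<in> topspace (simplex_topology \<sigma>) \<rightarrow> topspace (realization K)"
    using assms by (auto simp: realization_set_def)
  fix U assume "openin (realization K) U"
  then have "openin (simplex_topology \<sigma>) (U \<inter> closed_simplex \<sigma>)"
    using assms openin_realization by blast
  moreover have "{x \<in> topspace (simplex_topology \<sigma>). id x \<in> U} = U \<inter> closed_simplex \<sigma>"
    by auto
  ultimately show "openin (simplex_topology \<sigma>) {x \<in> topspace (simplex_topology \<sigma>). id x \<in> U}"
    by simp
qed

lemma continuous_map_into_realization: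
  assumes "\<tau> \<in> K" and "continuous_map T (powertop_real UNIV) f"
    and "f \<in> topspace T \<rightarrow> closed_simplex \<tau>"
  shows "continuous_map T (realization K) f"
proof -
  have "continuous_map T (simplex_topology \<tau>) f"
    using assms(2,3) by (auto simp: continuous_map_in_subtopology)
  then show ?thesis
    using continuous_map_compose continuous_map_closed_simplex_realization[OF assms(1)]
    by fastforce
qed

lemma continuous_map_realization:
  assumes "\<And>\<sigma>. \<sigma> \<in> K \<Longrightarrow> continuous_map (simplex_topology \<sigma>) T f"
  shows "continuous_map (realization K) T f"
  unfolding continuous_map_def
proof (intro conjI allI impI)
  show "f \<in> topspace (realization K) \<rightarrow> topspace T"
  proof
    fix x assume "x \<in> topspace (realization K)"
    then obtain \<sigma> where "\<sigma> \<in> K" "x \<in> closed_simplex \<sigma>"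
      by (auto simp: realization_set_def)
    then show "f x \<in> topspace T"
      using assms continuous_map_image_subset_topspace by fastforce
  qed
  fix V assume V: "openin T V"
  have "{x \<in> topspace (realization K). f x \<in> V} \<inter> closed_simplex \<sigma>
        = {x \<in> topspace (simplex_topology \<sigma>). f x \<in> V}" if "\<sigma> \<in> K" for \<sigma>
    using that by (auto simp: realization_set_def)
  then show "openin (realization K) {x \<in> topspace (realization K). f x \<in> V}"
    using assms V by (simp add: openin_realization continuous_map_def)
qed

lemma continuous_map_realization_subcomplex:
  assumes "L \<subseteq> K"
  shows "continuous_map (realization L) (realization K) id"
  using assms by (intro continuous_map_realization continuous_map_closed_simplex_realization) blast

lemma openin_realization_tube:
  assumes J: "compactin T J"
    and W: "\<And>\<sigma>. \<sigma> \<in> K \<Longrightarrow>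
      openin (prod_topology T (simplex_topology \<sigma>)) (W \<inter> (topspace T \<times> closed_simplex \<sigma>))"
  shows "openin (realization K) {\<alpha> \<in> realization_set K. J \<times> {\<alpha>} \<subseteq> W}"
    (is "openin _ ?N")
  unfolding openin_realization
proof (intro conjI ballI)
  show "?N \<subseteq> realization_set K"
    by blast
  fix \<sigma> assume \<sigma>: "\<sigma> \<in> K"
  show "openin (simplex_topology \<sigma>) (?N \<inter> closed_simplex \<sigma>)"
  proof (rule openin_subopen[THEN iffD2], intro ballI)
    fix \<alpha> assume \<alpha>: "\<alpha> \<in> ?N \<inter> closed_simplex \<sigma>"
    moreover have "J \<subseteq> topspace T"
      using J compactin_subset_topspace by blast
    ultimately have "J \<times> {\<alpha>} \<subseteq> W \<inter> (topspace T \<times> closed_simplex \<sigma>)"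
      by blast
    moreover have "\<alpha> \<in> topspace (simplex_topology \<sigma>)"
      using \<alpha> by simp
    ultimately obtain U V where UV: "openin T U" "openin (simplex_topology \<sigma>) V" "J \<subseteq> U" "\<alpha> \<in> V"
        "U \<times> V \<subseteq> W \<inter> (topspace T \<times> closed_simplex \<sigma>)"
      using tube_lemma_left[OF W[OF \<sigma>] J] by meson
    have "V \<subseteq> ?N \<inter> closed_simplex \<sigma>"
      using UV \<sigma> openin_subset[OF UV(2)] by (auto simp: realization_set_def)
    with UV show "\<exists>V. openin (simplex_topology \<sigma>) V \<and> \<alpha> \<in> V \<and> V \<subseteq> ?N \<inter> closed_simplex \<sigma>"
      by blast
  qed
qed

text \<open>A preimage \<open>W\<close> contains, around each of its points \<open>(t, \<alpha>)\<close>, the open box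
  \<open>B \<times> {\<beta>. J \<times> {\<beta>} \<subseteq> W}\<close>, where \<open>t \<in> B \<subseteq> J\<close> and \<open>J\<close> is compact; the second factor is
  open by the tube lemma applied in every simplex.\<close>
lemma continuous_map_prod_realization:
  assumes T: "locally_compact_space T" "Hausdorff_space T"
    and cont: "\<And>\<sigma>. \<sigma> \<in> K \<Longrightarrow> continuous_map (prod_topology T (simplex_topology \<sigma>)) S H"
  shows "continuous_map (prod_topology T (realization K)) S H"
  unfolding continuous_map_def
proof (intro conjI allI impI)
  show "H \<in> topspace (prod_topology T (realization K)) \<rightarrow> topspace S"
  proof
    fix p assume "p \<in> topspace (prod_topology T (realization K))"
    then obtain \<sigma> where "\<sigma> \<in> K" "p \<in> topspace (prod_topology T (simplex_topology \<sigma>))"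
      by (auto simp: realization_set_def)
    then show "H p \<in> topspace S"
      using cont continuous_map_image_subset_topspace by blast
  qed
  fix V assume V: "openin S V"
  define W where "W = {p \<in> topspace (prod_topology T (realization K)). H p \<in> V}"
  have W_simplex:
    "openin (prod_topology T (simplex_topology \<sigma>)) (W \<inter> (topspace T \<times> closed_simplex \<sigma>))"
    if "\<sigma> \<in> K" for \<sigma>
  proof -
    have "W \<inter> (topspace T \<times> closed_simplex \<sigma>)
        = {p \<in> topspace (prod_topology T (simplex_topology \<sigma>)). H p \<in> V}"
      using that by (auto simp: W_def realization_set_def)
    then show ?thesis
      using cont[OF that] V by (simp add: continuous_map_def)
  qed
  have nbhd: "neighbourhood_base_of (compactin T) T"
    using T locally_compact_space_neighbourhood_base by blast
  show "openin (prod_topology T (realization K)) W"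
  proof (rule openin_subopen[THEN iffD2], intro ballI)
    fix p assume "p \<in> W"
    then have "p \<in> topspace T \<times> realization_set K"
      by (simp add: W_def)
    then obtain t \<alpha> \<sigma> where p: "p = (t, \<alpha>)" "t \<in> topspace T" "\<sigma> \<in> K" "\<alpha> \<in> closed_simplex \<sigma>"
      unfolding realization_set_def by blast
    with \<open>p \<in> W\<close> have "(t, \<alpha>) \<in> W \<inter> (topspace T \<times> closed_simplex \<sigma>)"
      by simp
    then obtain U V0 where U: "openin T U" "t \<in> U" "\<alpha> \<in> V0"
        "U \<times> V0 \<subseteq> W \<inter> (topspace T \<times> closed_simplex \<sigma>)"
      using openin_prod_topology_alt[THEN iffD1, OF W_simplex[OF p(3)], rule_format] by meson
    obtain B J where BJ: "openin T B" "compactin T J" "t \<in> B" "B \<subseteq> J" "J \<subseteq> U"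
      using nbhd[unfolded neighbourhood_base_of, rule_format, OF conjI[OF U(1,2)]] by meson
    define N where "N = {\<beta> \<in> realization_set K. J \<times> {\<beta>} \<subseteq> W}"
    have "openin (realization K) N"
      unfolding N_def using BJ(2) W_simplex by (rule openin_realization_tube)
    moreover have "\<alpha> \<in> N"
      using U BJ(5) p(3,4) by (auto simp: N_def realization_set_def)
    moreover have "B \<times> N \<subseteq> W"
      using BJ(4) by (auto simp: N_def)
    ultimately show "\<exists>X. openin (prod_topology T (realization K)) X \<and> p \<in> X \<and> X \<subseteq> W"
      using BJ(1,3) p(1) by (intro exI[of _ "B \<times> N"]) (simp add: openin_prod_Times_iff)
  qed
qed

lemma closed_simplex_nonneg: "\<alpha> \<in> closed_simplex \<sigma> \<Longrightarrow> 0 \<le> \<alpha> u"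
  by (simp add: closed_simplex_def)

lemma closed_simplex_eq_0: "\<alpha> \<in> closed_simplex \<sigma> \<Longrightarrow> u \<notin> \<sigma> \<Longrightarrow> \<alpha> u = 0"
  by (simp add: closed_simplex_def)

lemma sum_closed_simplex: "\<alpha> \<in> closed_simplex \<sigma> \<Longrightarrow> sum \<alpha> \<sigma> = 1"
  by (simp add: closed_simplex_def)

lemma closed_simplex_mono:
  assumes "\<alpha> \<in> closed_simplex \<sigma>" "\<sigma> \<subseteq> \<tau>" "finite \<tau>"
  shows "\<alpha> \<in> closed_simplex \<tau>"
proof -
  have "sum \<alpha> \<tau> = sum \<alpha> \<sigma>"
    using assms closed_simplex_eq_0[OF assms(1)] by (intro sum.mono_neutral_right) auto
  then show ?thesis
    using assms by (auto simp: closed_simplex_def)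
qed

lemma closed_simplex_Int:
  assumes "\<alpha> \<in> closed_simplex \<tau>" "finite \<tau>" "\<And>u. u \<notin> B \<Longrightarrow> \<alpha> u = 0"
  shows "\<alpha> \<in> closed_simplex (\<tau> \<inter> B)"
proof -
  have "sum \<alpha> (\<tau> \<inter> B) = sum \<alpha> \<tau>"
    using assms by (intro sum.mono_neutral_left) auto
  then show ?thesis
    using assms by (auto simp: closed_simplex_def)
qed

lemma closed_simplex_convex:
  assumes "\<alpha> \<in> closed_simplex \<tau>" "\<beta> \<in> closed_simplex \<tau>" "t \<in> {0..1}"
  shows "(\<lambda>u. (1 - t) * \<alpha> u + t * \<beta> u) \<in> closed_simplex \<tau>"
proof -
  have "(\<Sum>u\<in>\<tau>. (1 - t) * \<alpha> u + t * \<beta> u) = (1 - t) * sum \<alpha> \<tau> + t * sum \<beta> \<tau>"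
    by (simp add: sum.distrib sum_distrib_left)
  also have "\<dots> = 1"
    using assms by (simp add: sum_closed_simplex)
  finally show ?thesis
    using assms by (auto simp: closed_simplex_def)
qed

lemma continuous_map_simplex_coordinate:
  "continuous_map (simplex_topology \<sigma>) euclideanreal (\<lambda>\<alpha>. \<alpha> u)"
  by (rule continuous_map_from_subtopology)
     (use continuous_map_product_projection[of u UNIV "\<lambda>_. euclideanreal"] in simp)

section \<open>Deformation retractions\<close>

lemma sphere_base_in_nsphere: "sphere_base \<in> topspace (nsphere n)"
proof -
  have "(\<Sum>i\<le>n. sphere_base i ^ 2) = (\<Sum>i\<in>{0}. sphere_base i ^ 2)"
    by (rule sum.mono_neutral_right) (auto simp: sphere_base_def)
  then show ?thesis
    by (simp add: nsphere sphere_base_def)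
qed

lemma weak_equivalence_deformation_retract:
  assumes incl: "continuous_map A B id"
    and r: "continuous_map B A r" "\<And>x. x \<in> topspace A \<Longrightarrow> r x = x"
    and hom: "homotopic_with (\<lambda>k. \<forall>x\<in>topspace A. k x = x) B B id r"
  shows "weak_equivalence A B id"
  unfolding weak_equivalence_def
proof (intro conjI allI ballI impI)
  show "continuous_map A B id"
    by (rule incl)
  show "topspace B = {}" if "topspace A = {}"
    using r(1) that continuous_map_image_subset_topspace by blast
next
  fix n x g h
  assume x: "x \<in> topspace A"
    and gh: "continuous_map (nsphere n) A g \<and> g sphere_base = x \<and>
      continuous_map (nsphere n) A h \<and> h sphere_base = x \<and>
      homotopic_with (\<lambda>k. k sphere_base = id x) (nsphere n) B (id \<circ> g) (id \<circ> h)"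
  then have "homotopic_with (\<lambda>k. k sphere_base = x) (nsphere n) A (r \<circ> (id \<circ> g)) (r \<circ> (id \<circ> h))"
    by (auto intro: homotopic_with_compose_continuous_map_left[OF _ r(1)] simp: r(2))
  then show "homotopic_with (\<lambda>k. k sphere_base = x) (nsphere n) A g h"
  proof (rule homotopic_with_eq)
    fix z assume "z \<in> topspace (nsphere n)"
    then have "g z \<in> topspace A" "h z \<in> topspace A"
      using gh continuous_map_image_subset_topspace by blast+
    then show "g z = (r \<circ> (id \<circ> g)) z" "h z = (r \<circ> (id \<circ> h)) z"
      by (simp_all add: r(2))
  next
    fix k k' :: "(nat \<Rightarrow> real) \<Rightarrow> 'a"
    assume "\<And>z. z \<in> topspace (nsphere n) \<Longrightarrow> k z = k' z"
    then show "(k sphere_base = x) = (k' sphere_base = x)"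
      using sphere_base_in_nsphere by metis
  qed
next
  fix n x k
  assume x: "x \<in> topspace A" and k: "continuous_map (nsphere n) B k \<and> k sphere_base = id x"
  have "homotopic_with (\<lambda>j. j sphere_base = x) (nsphere n) B (id \<circ> k) (r \<circ> k)"
    using k x by (intro homotopic_with_compose_continuous_map_right[OF hom]) auto
  then show "\<exists>g. continuous_map (nsphere n) A g \<and> g sphere_base = x \<and>
      homotopic_with (\<lambda>j. j sphere_base = id x) (nsphere n) B k (id \<circ> g)"
    using k x r by (intro exI[of _ "r \<circ> k"]) (auto intro: continuous_map_compose)
qed

lemma homotopic_with_id_straight_line:
  assumes K: "simplicial_complex K"
    and cont: "\<And>\<sigma>. \<sigma> \<in> K \<Longrightarrow> continuous_map (simplex_topology \<sigma>) (powertop_real UNIV) f"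
    and carried: "\<And>\<sigma>. \<sigma> \<in> K \<Longrightarrow> \<exists>\<tau>\<in>K. \<sigma> \<subseteq> \<tau> \<and> f ` closed_simplex \<sigma> \<subseteq> closed_simplex \<tau>"
  shows "homotopic_with (\<lambda>k. \<forall>x. f x = x \<longrightarrow> k x = x) (realization K) (realization K) id f"
  unfolding homotopic_with_def
proof (intro exI conjI allI ballI impI)
  let ?H = "\<lambda>(t, \<alpha>) u. (1 - t) * \<alpha> u + t * f \<alpha> u"
  let ?I = "top_of_set {0..1::real}"
  show "continuous_map (prod_topology ?I (realization K)) (realization K) ?H"
  proof (rule continuous_map_prod_realization)
    show "locally_compact_space ?I"
      by (simp add: compact_imp_locally_compact_space compact_space_subtopology)
    show "Hausdorff_space ?I"
      by (simp add: Hausdorff_space_subtopology)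
    fix \<sigma> assume "\<sigma> \<in> K"
    then obtain \<tau> where \<tau>: "\<tau> \<in> K" "\<sigma> \<subseteq> \<tau>" "f ` closed_simplex \<sigma> \<subseteq> closed_simplex \<tau>"
      using carried by blast
    have "finite \<tau>"
      using K \<tau>(1) by (simp add: simplicial_complex_def)
    show "continuous_map (prod_topology ?I (simplex_topology \<sigma>)) (realization K) ?H"
    proof (rule continuous_map_into_realization[OF \<tau>(1)])
      have "continuous_map (prod_topology ?I (simplex_topology \<sigma>)) euclideanreal
              (\<lambda>p. (1 - fst p) * snd p u + fst p * f (snd p) u)" for u
      proof -
        have "continuous_map (simplex_topology \<sigma>) euclideanreal (\<lambda>\<alpha>. f \<alpha> u)"
          using cont[OF \<open>\<sigma> \<in> K\<close>] by (simp add: continuous_map_componentwise_UNIV)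
        then have "continuous_map (prod_topology ?I (simplex_topology \<sigma>)) euclideanreal
              (\<lambda>p. f (snd p) u)"
          using continuous_map_compose[OF continuous_map_snd] by (simp add: o_def)
        moreover have "continuous_map (prod_topology ?I (simplex_topology \<sigma>)) euclideanreal
              (\<lambda>p. snd p u)"
          using continuous_map_compose[OF continuous_map_snd continuous_map_simplex_coordinate]
          by (simp add: o_def)
        moreover have "continuous_map (prod_topology ?I (simplex_topology \<sigma>)) euclideanreal fst"
          using continuous_map_fst continuous_map_into_fulltopology by blast
        ultimately show ?thesis
          by (intro continuous_map_add continuous_map_real_mult continuous_map_diff) simp_all
      qed
      then show "continuous_map (prod_topology ?I (simplex_topology \<sigma>)) (powertop_real UNIV) ?H"
        by (simp add: continuous_map_componentwise_UNIV case_prod_unfold)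
      show "?H \<in> topspace (prod_topology ?I (simplex_topology \<sigma>)) \<rightarrow> closed_simplex \<tau>"
      proof
        fix p assume "p \<in> topspace (prod_topology ?I (simplex_topology \<sigma>))"
        then obtain t \<alpha> where p: "p = (t, \<alpha>)" "t \<in> {0..1}" "\<alpha> \<in> closed_simplex \<sigma>"
          by auto
        then have "\<alpha> \<in> closed_simplex \<tau>" "f \<alpha> \<in> closed_simplex \<tau>"
          using \<tau> \<open>finite \<tau>\<close> closed_simplex_mono by blast+
        then show "?H p \<in> closed_simplex \<tau>"
          using p closed_simplex_convex by simp
      qed
    qed
  qed
qed (auto simp: algebra_simps)

section \<open>Coning off simplices across the cover\<close>

lemma simplicial_complex_face:
  "simplicial_complex K \<Longrightarrow> \<sigma> \<in> K \<Longrightarrow> \<tau> \<subseteq> \<sigma> \<Longrightarrow> \<tau> \<noteq> {} \<Longrightarrow> \<tau> \<in> K"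
  unfolding simplicial_complex_def by blast

lemma simplicial_complex_finite: "simplicial_complex K \<Longrightarrow> \<sigma> \<in> K \<Longrightarrow> finite \<sigma>"
  unfolding simplicial_complex_def by blast

lemma simplex_subset_vertices: "simplicial_complex K \<Longrightarrow> \<sigma> \<in> K \<Longrightarrow> \<sigma> \<subseteq> vertices K"
  unfolding vertices_def using simplicial_complex_face[of K \<sigma> "{_}"] by blast

lemma clique_complexI:
  assumes "clique_complex K" "finite \<sigma>" "2 \<le> card \<sigma>"
    and "\<And>u v. u \<in> \<sigma> \<Longrightarrow> v \<in> \<sigma> \<Longrightarrow> u \<noteq> v \<Longrightarrow> {u, v} \<in> K"
  shows "\<sigma> \<in> K"
  using assms unfolding clique_complex_def by blast

lemma insert_apex_in_clique_complex:
  assumes K: "simplicial_complex K" "clique_complex K"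
    and a: "a \<in> X" "a \<in> Y"
    and cross: "\<And>x y b. {x, y} \<in> K \<Longrightarrow> x \<in> X - Y \<Longrightarrow> y \<in> Y - X \<Longrightarrow> b \<in> X \<inter> Y \<Longrightarrow>
      {x, y, a, b} \<in> K"
    and \<sigma>: "\<sigma> \<in> K" "\<sigma> \<subseteq> X \<union> Y" "\<not> \<sigma> \<subseteq> X" "\<not> \<sigma> \<subseteq> Y"
  shows "insert a \<sigma> \<in> K"
proof -
  obtain x y where x: "x \<in> \<sigma>" "x \<in> X - Y" and y: "y \<in> \<sigma>" "y \<in> Y - X"
    using \<sigma> by blast
  have edge: "{p, q} \<in> K" if "p \<in> \<sigma>" "q \<in> \<sigma>" for p q
    by (rule simplicial_complex_face[OF K(1) \<sigma>(1)]) (use that in auto)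
  have apex_edge: "{a, q} \<in> K" if q: "q \<in> \<sigma>" for q
  proof -
    have face: "{a, q} \<in> K" if "\<rho> \<in> K" "a \<in> \<rho>" "q \<in> \<rho>" for \<rho>
      by (rule simplicial_complex_face[OF K(1) that(1)]) (use that in auto)
    consider "q \<in> X - Y" | "q \<in> Y - X" | "q \<in> X \<inter> Y"
      using q \<sigma>(2) by blast
    then show ?thesis
    proof cases
      case 1
      then have "{q, y, a, a} \<in> K"
        using cross[OF edge[OF q y(1)]] y(2) a by blast
      then show ?thesis
        by (rule face) auto
    next
      case 2
      then have "{x, q, a, a} \<in> K"
        using cross[OF edge[OF x(1) q]] x(2) a by blast
      then show ?thesis
        by (rule face) auto
    next
      case 3
      then have "{x, y, a, q} \<in> K"
        using cross[OF edge[OF x(1) y(1)]] x(2) y(2) by blast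
      then show ?thesis
        by (rule face) auto
    qed
  qed
  have "finite (insert a \<sigma>)"
    using simplicial_complex_finite[OF K(1) \<sigma>(1)] by simp
  moreover have "2 \<le> card (insert a \<sigma>)"
  proof -
    have "x \<noteq> y"
      using x y by blast
    then have "card {x, y} = 2"
      by simp
    moreover have "card {x, y} \<le> card (insert a \<sigma>)"
      using x y \<open>finite (insert a \<sigma>)\<close> by (intro card_mono) auto
    ultimately show ?thesis
      by simp
  qed
  moreover have "{u, v} \<in> K" if "u \<in> insert a \<sigma>" "v \<in> insert a \<sigma>" "u \<noteq> v" for u v
    using that edge apex_edge[of u] apex_edge[of v] by (auto simp: insert_commute)
  ultimately show ?thesis
    by (rule clique_complexI[OF K(2)])
qed

lemma cross_edge_spans_apex:
  assumes hyp: "(X \<inter> Y \<noteq> {} \<and>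
          (\<forall>\<tau>\<in>edges K - {\<sigma>\<in>K. \<sigma> \<subseteq> X \<or> \<sigma> \<subseteq> Y \<or> \<sigma> \<inter> (X \<inter> Y) \<noteq> {}}.
             \<forall>\<mu>. \<mu> \<subseteq> X \<inter> Y \<and> finite \<mu> \<and> card \<mu> \<le> 2 \<longrightarrow> \<tau> \<union> \<mu> \<in> K))
         \<or> (\<exists>v. X \<inter> Y = {v} \<and>
          (\<forall>\<tau>\<in>edges K - {\<sigma>\<in>K. \<sigma> \<subseteq> X \<or> \<sigma> \<subseteq> Y \<or> \<sigma> \<inter> (X \<inter> Y) \<noteq> {}}.
             \<tau> \<union> {v} \<in> K))"
    and a: "a \<in> X" "a \<in> Y"
    and xy: "{x, y} \<in> K" "x \<in> X - Y" "y \<in> Y - X" and b: "b \<in> X \<inter> Y"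
  shows "{x, y, a, b} \<in> K"
proof -
  let ?E = "edges K - {\<sigma>\<in>K. \<sigma> \<subseteq> X \<or> \<sigma> \<subseteq> Y \<or> \<sigma> \<inter> (X \<inter> Y) \<noteq> {}}"
  have "x \<noteq> y"
    using xy by blast
  then have edge: "{x, y} \<in> ?E"
    using xy by (auto simp: edges_def)
  from hyp show ?thesis
  proof
    assume "X \<inter> Y \<noteq> {} \<and> (\<forall>\<tau>\<in>?E. \<forall>\<mu>. \<mu> \<subseteq> X \<inter> Y \<and> finite \<mu> \<and> card \<mu> \<le> 2 \<longrightarrow> \<tau> \<union> \<mu> \<in> K)"
    then have "\<forall>\<tau>\<in>?E. \<forall>\<mu>. \<mu> \<subseteq> X \<inter> Y \<and> finite \<mu> \<and> card \<mu> \<le> 2 \<longrightarrow> \<tau> \<union> \<mu> \<in> K"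
      by (rule conjunct2)
    from this[rule_format, OF edge, of "{a, b}"] have "{x, y} \<union> {a, b} \<in> K"
      using a b by (simp add: card_insert_le_m1)
    then show ?thesis
      by (simp add: insert_commute)
  next
    assume "\<exists>v. X \<inter> Y = {v} \<and> (\<forall>\<tau>\<in>?E. \<tau> \<union> {v} \<in> K)"
    then obtain v where v: "X \<inter> Y = {v}" and "{x, y} \<union> {v} \<in> K"
      using edge by blast
    moreover have "a = v" "b = v"
      using a b v by blast+
    ultimately show ?thesis
      by (simp add: insert_commute)
  qed
qed

section \<open>The apex retraction\<close>


text \<open>Masses are summed over the support, so the maps below do not depend on a choice of
  carrying simplex.\<close>
definition side_mass :: "'a set \<Rightarrow> 'a set \<Rightarrow> ('a \<Rightarrow> real) \<Rightarrow> real" where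
  "side_mass X Y \<alpha> = sum \<alpha> {u \<in> X - Y. \<alpha> u \<noteq> 0}"

definition shaving :: "'a set \<Rightarrow> 'a set \<Rightarrow> ('a \<Rightarrow> real) \<Rightarrow> 'a \<Rightarrow> real" where
  "shaving X Y \<alpha> u =
    (if u \<in> X - Y then min (\<alpha> u) (side_mass Y X \<alpha>)
     else if u \<in> Y - X then min (\<alpha> u) (side_mass X Y \<alpha>) else 0)"

definition apex_retraction :: "'a set \<Rightarrow> 'a set \<Rightarrow> 'a \<Rightarrow> ('a \<Rightarrow> real) \<Rightarrow> 'a \<Rightarrow> real" where
  "apex_retraction X Y a \<alpha> u =
    \<alpha> u - shaving X Y \<alpha> u + (if u = a then sum (shaving X Y \<alpha>) {v. \<alpha> v \<noteq> 0} else 0)"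

lemma shaving_commute: "shaving Y X = shaving X Y"
  by (auto simp: shaving_def fun_eq_iff)

lemma apex_retraction_commute: "apex_retraction Y X a = apex_retraction X Y a"
  by (intro ext) (simp add: apex_retraction_def shaving_commute)

lemma side_mass_eq_sum:
  assumes "\<alpha> \<in> closed_simplex \<sigma>" "finite \<sigma>"
  shows "side_mass X Y \<alpha> = sum \<alpha> (\<sigma> \<inter> (X - Y))"
  unfolding side_mass_def
proof (rule sum.mono_neutral_left)
  show "{u \<in> X - Y. \<alpha> u \<noteq> 0} \<subseteq> \<sigma> \<inter> (X - Y)"
    using closed_simplex_eq_0[OF assms(1)] by blast
qed (use assms(2) in auto)

lemma side_mass_nonneg: "\<alpha> \<in> closed_simplex \<sigma> \<Longrightarrow> 0 \<le> side_mass X Y \<alpha>"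
  unfolding side_mass_def by (intro sum_nonneg) (simp add: closed_simplex_nonneg)

lemma side_mass_eq_0:
  assumes "\<alpha> \<in> closed_simplex \<sigma>" "\<sigma> \<subseteq> Y"
  shows "side_mass X Y \<alpha> = 0"
proof -
  have "{u \<in> X - Y. \<alpha> u \<noteq> 0} = {}"
    using assms(2) closed_simplex_eq_0[OF assms(1)] by blast
  then show ?thesis
    by (simp only: side_mass_def sum.empty)
qed

lemma le_side_mass:
  assumes "\<alpha> \<in> closed_simplex \<sigma>" "finite \<sigma>" "u \<in> X - Y"
  shows "\<alpha> u \<le> side_mass X Y \<alpha>"
proof (cases "u \<in> \<sigma>")
  case True
  then show ?thesis
    unfolding side_mass_eq_sum[OF assms(1,2)]
    using assms by (intro member_le_sum) (auto simp: closed_simplex_nonneg)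
next
  case False
  then have "\<alpha> u = 0"
    by (rule closed_simplex_eq_0[OF assms(1)])
  then show ?thesis
    using side_mass_nonneg[OF assms(1)] by simp
qed

lemma shaving_bounds:
  assumes "\<alpha> \<in> closed_simplex \<sigma>"
  shows "0 \<le> shaving X Y \<alpha> u" "shaving X Y \<alpha> u \<le> \<alpha> u"
  using side_mass_nonneg[OF assms] closed_simplex_nonneg[OF assms, of u]
  by (auto simp: shaving_def)

lemma sum_shaving_eq:
  assumes "\<alpha> \<in> closed_simplex \<sigma>" "\<sigma> \<subseteq> \<tau>" "finite \<tau>"
  shows "sum (shaving X Y \<alpha>) {v. \<alpha> v \<noteq> 0} = sum (shaving X Y \<alpha>) \<tau>"
proof (rule sum.mono_neutral_left)
  show "{v. \<alpha> v \<noteq> 0} \<subseteq> \<tau>"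
    using assms closed_simplex_eq_0[OF assms(1)] by blast
  show "\<forall>v\<in>\<tau> - {v. \<alpha> v \<noteq> 0}. shaving X Y \<alpha> v = 0"
  proof
    fix v assume "v \<in> \<tau> - {v. \<alpha> v \<noteq> 0}"
    then show "shaving X Y \<alpha> v = 0"
      using shaving_bounds[OF assms(1), of X Y v] by simp
  qed
qed (use assms in auto)

lemma apex_retraction_in_closed_simplex:
  assumes \<alpha>: "\<alpha> \<in> closed_simplex \<sigma>" and \<tau>: "\<sigma> \<subseteq> \<tau>" "finite \<tau>" "a \<in> \<tau>"
  shows "apex_retraction X Y a \<alpha> \<in> closed_simplex \<tau>"
proof -
  have \<alpha>\<tau>: "\<alpha> \<in> closed_simplex \<tau>"
    using \<alpha> \<tau> closed_simplex_mono by blast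
  have "sum (apex_retraction X Y a \<alpha>) \<tau>
      = sum \<alpha> \<tau> - sum (shaving X Y \<alpha>) \<tau> + (\<Sum>u\<in>\<tau>. if u = a then sum (shaving X Y \<alpha>) \<tau> else 0)"
    unfolding apex_retraction_def sum_shaving_eq[OF \<alpha> \<tau>(1,2)]
    by (simp add: sum.distrib sum_subtractf)
  also have "\<dots> = 1"
    using \<tau> sum_closed_simplex[OF \<alpha>\<tau>] by simp
  finally have "sum (apex_retraction X Y a \<alpha>) \<tau> = 1" .
  moreover have "0 \<le> apex_retraction X Y a \<alpha> u" for u
    using shaving_bounds[OF \<alpha>, of X Y] sum_nonneg[of "{v. \<alpha> v \<noteq> 0}" "shaving X Y \<alpha>"]
    by (simp add: apex_retraction_def)
  moreover have "apex_retraction X Y a \<alpha> u = 0" if "u \<notin> \<tau>" for u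
    using shaving_bounds[OF \<alpha>, of X Y u] closed_simplex_eq_0[OF \<alpha>\<tau> that] that \<tau>(3)
    by (auto simp: apex_retraction_def)
  ultimately show ?thesis
    by (simp add: closed_simplex_def)
qed

lemma apex_retraction_eq_self:
  assumes "\<alpha> \<in> closed_simplex \<sigma>" "\<sigma> \<subseteq> X"
  shows "apex_retraction X Y a \<alpha> = \<alpha>"
proof -
  have "side_mass Y X \<alpha> = 0"
    by (rule side_mass_eq_0[OF assms])
  then have "shaving X Y \<alpha> u = 0" for u
  proof (cases "u \<in> \<sigma>")
    case True
    then show ?thesis
      using assms(2) \<open>side_mass Y X \<alpha> = 0\<close> closed_simplex_nonneg[OF assms(1), of u]
      by (auto simp: shaving_def)
  next
    case False
    then have "\<alpha> u = 0"
      by (rule closed_simplex_eq_0[OF assms(1)])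
    then show ?thesis
      using side_mass_nonneg[OF assms(1), of X Y] \<open>side_mass Y X \<alpha> = 0\<close> by (simp add: shaving_def)
  qed
  then show ?thesis
    by (simp add: apex_retraction_def fun_eq_iff)
qed

lemma apex_retraction_fixes_side:
  assumes "\<alpha> \<in> closed_simplex \<sigma>" "\<sigma> \<subseteq> X \<or> \<sigma> \<subseteq> Y"
  shows "apex_retraction X Y a \<alpha> = \<alpha>"
  using assms apex_retraction_eq_self apex_retraction_commute by metis

lemma apex_retraction_eq_0:
  assumes "\<alpha> \<in> closed_simplex \<sigma>" "finite \<sigma>" "side_mass X Y \<alpha> \<le> side_mass Y X \<alpha>" "a \<in> Y"
    and "u \<in> X - Y"
  shows "apex_retraction X Y a \<alpha> u = 0"
proof -
  have "\<alpha> u \<le> side_mass Y X \<alpha>"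
    using le_side_mass[OF assms(1,2,5)] assms(3) by linarith
  then show ?thesis
    using assms(4,5) by (auto simp: apex_retraction_def shaving_def)
qed

lemma apex_retraction_in_side:
  assumes \<alpha>: "\<alpha> \<in> closed_simplex \<sigma>" and \<sigma>: "finite \<sigma>" "\<sigma> \<subseteq> X \<union> Y"
    and "a \<in> Y" "side_mass X Y \<alpha> \<le> side_mass Y X \<alpha>"
  shows "apex_retraction X Y a \<alpha> \<in> closed_simplex (insert a \<sigma> \<inter> Y)"
proof (rule closed_simplex_Int)
  show r: "apex_retraction X Y a \<alpha> \<in> closed_simplex (insert a \<sigma>)"
    using \<alpha> \<sigma> by (intro apex_retraction_in_closed_simplex) auto
  fix u assume "u \<notin> Y"
  show "apex_retraction X Y a \<alpha> u = 0"
  proof (cases "u \<in> X")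
    case True
    then show ?thesis
      using apex_retraction_eq_0[OF \<alpha> \<sigma>(1)] assms \<open>u \<notin> Y\<close> by blast
  next
    case False
    then have "u \<notin> insert a \<sigma>"
      using \<sigma>(2) \<open>a \<in> Y\<close> \<open>u \<notin> Y\<close> by blast
    then show ?thesis
      by (rule closed_simplex_eq_0[OF r])
  qed
qed (use \<sigma> in simp)

lemma continuous_map_side_mass:
  assumes "finite \<sigma>"
  shows "continuous_map (simplex_topology \<sigma>) euclideanreal (side_mass X Y)"
proof (rule continuous_map_eq)
  show "continuous_map (simplex_topology \<sigma>) euclideanreal (\<lambda>\<alpha>. sum \<alpha> (\<sigma> \<inter> (X - Y)))"
    using assms by (intro continuous_map_sum continuous_map_simplex_coordinate) auto
  show "sum \<alpha> (\<sigma> \<inter> (X - Y)) = side_mass X Y \<alpha>" if "\<alpha> \<in> topspace (simplex_topology \<sigma>)" for \<alpha>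
    using that side_mass_eq_sum assms by fastforce
qed

lemma continuous_map_shaving:
  assumes "finite \<sigma>"
  shows "continuous_map (simplex_topology \<sigma>) euclideanreal (\<lambda>\<alpha>. shaving X Y \<alpha> u)"
  by (cases "u \<in> X - Y"; cases "u \<in> Y - X")
     (simp_all add: shaving_def continuous_map_real_min continuous_map_simplex_coordinate
       continuous_map_side_mass assms)

lemma continuous_map_apex_retraction:
  assumes "finite \<sigma>"
  shows "continuous_map (simplex_topology \<sigma>) (powertop_real UNIV) (apex_retraction X Y a)"
proof -
  have "continuous_map (simplex_topology \<sigma>) euclideanreal (\<lambda>\<alpha>. sum (shaving X Y \<alpha>) {v. \<alpha> v \<noteq> 0})"
  proof (rule continuous_map_eq)
    show "continuous_map (simplex_topology \<sigma>) euclideanreal (\<lambda>\<alpha>. sum (shaving X Y \<alpha>) \<sigma>)"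
      using assms by (intro continuous_map_sum continuous_map_shaving)
    show "sum (shaving X Y \<alpha>) \<sigma> = sum (shaving X Y \<alpha>) {v. \<alpha> v \<noteq> 0}"
      if "\<alpha> \<in> topspace (simplex_topology \<sigma>)" for \<alpha>
      using that assms sum_shaving_eq[of \<alpha> \<sigma> \<sigma>] by simp
  qed
  then have "continuous_map (simplex_topology \<sigma>) euclideanreal (\<lambda>\<alpha>. apex_retraction X Y a \<alpha> u)" for u
    by (cases "u = a") (simp_all add: apex_retraction_def continuous_map_add continuous_map_diff
        continuous_map_simplex_coordinate continuous_map_shaving assms)
  then show ?thesis
    by (simp add: continuous_map_componentwise_UNIV)
qed

lemma apex_retraction_fixes_cover:
  assumes "\<alpha> \<in> realization_set (full_subcomplex K X \<union> full_subcomplex K Y)"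
  shows "apex_retraction X Y a \<alpha> = \<alpha>"
proof -
  obtain \<sigma> where \<sigma>: "\<alpha> \<in> closed_simplex \<sigma>" "\<sigma> \<subseteq> X \<or> \<sigma> \<subseteq> Y"
    using assms by (auto simp: realization_set_def full_subcomplex_def)
  then show ?thesis
    by (rule apex_retraction_fixes_side)
qed

lemma continuous_map_apex_retraction_side:
  assumes K: "simplicial_complex K" "insert a \<sigma> \<in> K" and "\<sigma> \<subseteq> X \<union> Y" "a \<in> Y"
    and L: "full_subcomplex K Y \<subseteq> L"
  shows "continuous_map
    (subtopology (simplex_topology \<sigma>)
      {\<alpha>. \<alpha> \<in> topspace (simplex_topology \<sigma>) \<and> side_mass X Y \<alpha> \<le> side_mass Y X \<alpha>})
    (realization L) (apex_retraction X Y a)"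
proof (rule continuous_map_into_realization)
  have "finite \<sigma>"
    using simplicial_complex_finite[OF K] by simp
  show "insert a \<sigma> \<inter> Y \<in> L"
    using simplicial_complex_face[OF K, of "insert a \<sigma> \<inter> Y"] \<open>a \<in> Y\<close> L
    by (auto simp: full_subcomplex_def)
  show "continuous_map
      (subtopology (simplex_topology \<sigma>)
        {\<alpha>. \<alpha> \<in> topspace (simplex_topology \<sigma>) \<and> side_mass X Y \<alpha> \<le> side_mass Y X \<alpha>})
      (powertop_real UNIV) (apex_retraction X Y a)"
    by (rule continuous_map_from_subtopology[OF continuous_map_apex_retraction[OF \<open>finite \<sigma>\<close>]])
  show "apex_retraction X Y a \<in> topspace (subtopology (simplex_topology \<sigma>)
      {\<alpha>. \<alpha> \<in> topspace (simplex_topology \<sigma>) \<and> side_mass X Y \<alpha> \<le> side_mass Y X \<alpha>})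
      \<rightarrow> closed_simplex (insert a \<sigma> \<inter> Y)"
    using apex_retraction_in_side[OF _ \<open>finite \<sigma>\<close>] assms(3,4) by auto
qed

lemma continuous_map_apex_retraction_realization:
  assumes K: "simplicial_complex K" and cover: "\<And>\<sigma>. \<sigma> \<in> K \<Longrightarrow> \<sigma> \<subseteq> X \<union> Y"
    and a: "a \<in> X" "a \<in> Y"
    and apex: "\<And>\<sigma>. \<sigma> \<in> K \<Longrightarrow> \<not> \<sigma> \<subseteq> X \<Longrightarrow> \<not> \<sigma> \<subseteq> Y \<Longrightarrow> insert a \<sigma> \<in> K"
  shows "continuous_map (realization K) (realization (full_subcomplex K X \<union> full_subcomplex K Y))
    (apex_retraction X Y a)"
proof (rule continuous_map_realization)
  let ?L = "full_subcomplex K X \<union> full_subcomplex K Y"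
  fix \<sigma> assume "\<sigma> \<in> K"
  then have "finite \<sigma>"
    using K simplicial_complex_finite by blast
  show "continuous_map (simplex_topology \<sigma>) (realization ?L) (apex_retraction X Y a)"
  proof (cases "\<sigma> \<subseteq> X \<or> \<sigma> \<subseteq> Y")
    case True
    then have "\<sigma> \<in> ?L"
      using \<open>\<sigma> \<in> K\<close> by (auto simp: full_subcomplex_def)
    moreover have "apex_retraction X Y a \<alpha> \<in> closed_simplex \<sigma>" if "\<alpha> \<in> closed_simplex \<sigma>" for \<alpha>
      using apex_retraction_fixes_side[OF that True] that by simp
    ultimately show ?thesis
      using continuous_map_apex_retraction[OF \<open>finite \<sigma>\<close>]
      by (intro continuous_map_into_realization) auto
  next
    case False
    then have "insert a \<sigma> \<in> K"
      using apex \<open>\<sigma> \<in> K\<close> by blast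
    have "continuous_map (simplex_topology \<sigma>) (realization ?L)
      (\<lambda>\<alpha>. if side_mass X Y \<alpha> \<le> side_mass Y X \<alpha> then apex_retraction X Y a \<alpha>
            else apex_retraction X Y a \<alpha>)"
    proof (rule continuous_map_cases_le)
      show "continuous_map (simplex_topology \<sigma>) euclideanreal (side_mass X Y)"
        "continuous_map (simplex_topology \<sigma>) euclideanreal (side_mass Y X)"
        using \<open>finite \<sigma>\<close> by (simp_all add: continuous_map_side_mass)
      show "continuous_map (subtopology (simplex_topology \<sigma>)
          {\<alpha>. \<alpha> \<in> topspace (simplex_topology \<sigma>) \<and> side_mass X Y \<alpha> \<le> side_mass Y X \<alpha>})
          (realization ?L) (apex_retraction X Y a)"
        using K \<open>insert a \<sigma> \<in> K\<close> cover[OF \<open>\<sigma> \<in> K\<close>] a(2)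
        by (intro continuous_map_apex_retraction_side) auto
      show "continuous_map (subtopology (simplex_topology \<sigma>)
          {\<alpha>. \<alpha> \<in> topspace (simplex_topology \<sigma>) \<and> side_mass Y X \<alpha> \<le> side_mass X Y \<alpha>})
          (realization ?L) (apex_retraction X Y a)"
        using K \<open>insert a \<sigma> \<in> K\<close> cover[OF \<open>\<sigma> \<in> K\<close>] a(1)
          continuous_map_apex_retraction_side[of K a \<sigma> Y X ?L]
        by (auto simp: apex_retraction_commute[where X = X and Y = Y])
    qed simp
    then show ?thesis
      by simp
  qed
qed

lemma weak_equivalence_cover_inclusion:
  assumes K: "simplicial_complex K" and cover: "\<And>\<sigma>. \<sigma> \<in> K \<Longrightarrow> \<sigma> \<subseteq> X \<union> Y"
    and a: "a \<in> X" "a \<in> Y"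
    and apex: "\<And>\<sigma>. \<sigma> \<in> K \<Longrightarrow> \<not> \<sigma> \<subseteq> X \<Longrightarrow> \<not> \<sigma> \<subseteq> Y \<Longrightarrow> insert a \<sigma> \<in> K"
  shows "weak_equivalence (realization (full_subcomplex K X \<union> full_subcomplex K Y)) (realization K) id"
proof (rule weak_equivalence_deformation_retract)
  let ?L = "full_subcomplex K X \<union> full_subcomplex K Y"
  show "continuous_map (realization ?L) (realization K) id"
    by (rule continuous_map_realization_subcomplex) (auto simp: full_subcomplex_def)
  show "continuous_map (realization K) (realization ?L) (apex_retraction X Y a)"
    using assms by (rule continuous_map_apex_retraction_realization)
  show fixed: "apex_retraction X Y a x = x" if "x \<in> topspace (realization ?L)" for x
    using that apex_retraction_fixes_cover by simp
  have "homotopic_with (\<lambda>k. \<forall>x. apex_retraction X Y a x = x \<longrightarrow> k x = x)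
    (realization K) (realization K) id (apex_retraction X Y a)"
  proof (rule homotopic_with_id_straight_line[OF K])
    fix \<sigma> assume "\<sigma> \<in> K"
    then have "finite \<sigma>"
      using K simplicial_complex_finite by blast
    then show "continuous_map (simplex_topology \<sigma>) (powertop_real UNIV) (apex_retraction X Y a)"
      by (rule continuous_map_apex_retraction)
    show "\<exists>\<tau>\<in>K. \<sigma> \<subseteq> \<tau> \<and> apex_retraction X Y a ` closed_simplex \<sigma> \<subseteq> closed_simplex \<tau>"
    proof (cases "\<sigma> \<subseteq> X \<or> \<sigma> \<subseteq> Y")
      case True
      then have "apex_retraction X Y a ` closed_simplex \<sigma> \<subseteq> closed_simplex \<sigma>"
        using apex_retraction_fixes_side[OF _ True] by auto
      then show ?thesis
        using \<open>\<sigma> \<in> K\<close> by blast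
    next
      case False
      then have "insert a \<sigma> \<in> K"
        using apex \<open>\<sigma> \<in> K\<close> by blast
      moreover have "apex_retraction X Y a ` closed_simplex \<sigma> \<subseteq> closed_simplex (insert a \<sigma>)"
        using simplicial_complex_finite[OF K \<open>insert a \<sigma> \<in> K\<close>]
        by (auto intro: apex_retraction_in_closed_simplex)
      ultimately show ?thesis
        by blast
    qed
  qed
  then show "homotopic_with (\<lambda>k. \<forall>x\<in>topspace (realization ?L). k x = x)
    (realization K) (realization K) id (apex_retraction X Y a)"
    by (rule homotopic_with_mono) (simp add: fixed)
qed

theorem corollary9p4:
  fixes K :: "'a set set" and X Y :: "'a set"
  assumes "simplicial_complex K" and "clique_complex K"
    and "X \<union> Y = vertices K"
    and "(X \<inter> Y \<noteq> {} \<and>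
          (\<forall>\<tau>\<in>edges K - {\<sigma>\<in>K. \<sigma> \<subseteq> X \<or> \<sigma> \<subseteq> Y \<or> \<sigma> \<inter> (X \<inter> Y) \<noteq> {}}.
             \<forall>\<mu>. \<mu> \<subseteq> X \<inter> Y \<and> finite \<mu> \<and> card \<mu> \<le> 2 \<longrightarrow> \<tau> \<union> \<mu> \<in> K))
         \<or> (\<exists>v. X \<inter> Y = {v} \<and>
          (\<forall>\<tau>\<in>edges K - {\<sigma>\<in>K. \<sigma> \<subseteq> X \<or> \<sigma> \<subseteq> Y \<or> \<sigma> \<inter> (X \<inter> Y) \<noteq> {}}.
             \<tau> \<union> {v} \<in> K))"
  shows "weak_equivalence (realization (full_subcomplex K X \<union> full_subcomplex K Y))
           (realization K) id"
proof -
  obtain a where a: "a \<in> X" "a \<in> Y"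
    using assms(4) by blast
  have cover: "\<sigma> \<subseteq> X \<union> Y" if "\<sigma> \<in> K" for \<sigma>
    using simplex_subset_vertices[OF assms(1) that] assms(3) by simp
  have apex: "insert a \<sigma> \<in> K" if "\<sigma> \<in> K" "\<not> \<sigma> \<subseteq> X" "\<not> \<sigma> \<subseteq> Y" for \<sigma>
    by (rule insert_apex_in_clique_complex[OF assms(1,2) a cross_edge_spans_apex[OF assms(4) a]
          that(1) cover[OF that(1)] that(2,3)])
  show ?thesis
    by (rule weak_equivalence_cover_inclusion[OF assms(1) cover a apex])
qed

end
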